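(* Let $\langle E,\rightarrow\rangle$ be a computation and $b$ a regular predicate, and let $S$ denote the slice of $\langle E,\rightarrow\rangle$ with respect to $b$. Then: (1) $\mathrm{possibly}(b)$ holds iff $S$ has at least two strongly connected components; (2) $\mathrm{invariant}(b)$ holds iff $S$ and $\langle E,\rightarrow\rangle$ have the same set of consistent cuts; (3) $\mathrm{controllable}(b)$ holds iff $S$ has the same number of strongly connected components as $\langle E,\rightarrow\rangle$.
   Context: A computation is a directed graph $\langle E, \rightarrow\rangle$ whose vertices (events) are partitioned among processes, each with an initial and final event, whose path relation contains Lamport's happened-before relation, with all initial events in one strongly connected component and all final events in one. A vertex subset $C$ is a consistent cut if for every edge $(u,v)$, $v\in C$ implies $u\in C$; $\emptyset$ and $E$ are trivial. A predicate is evaluated on non-trivial consistent cuts; it is regular if whenever consistent cuts $C_1,C_2$ satisfy it, so do $C_1\cap C_2$ and $C_1\cup C_2$. The slice with respect to $b$ is a directed graph on $E$ whose consistent cuts include every consistent cut of the computation satisfying $b$ and which has the fewest consistent cuts among all such graphs. Modalities: $\mathrm{possibly}(b)$ holds if some non-trivial consistent cut of the computation satisfies $b$; $\mathrm{invariant}(b)$ holds if every non-trivial consistent cut satisfies $b$; $\mathrm{controllable}(b)$ holds if there is a maximal chain $\emptyset=C_0\subset C_1\subset\dots\subset C_m=E$ in the lattice of consistent cuts of the computation (ordered by inclusion) such that every non-trivial $C_j$ satisfies $b$. *)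

theory Defs
  imports Main
begin

(* A computation: events E, edge relation R on E, processes ps (each process is
   the list of its events in process order; hd = initial event, last = final event),
   and messages msgs (send, receive) pairs used to define Lamport's happened-before. *)

definition proc_order :: "'a list list \<Rightarrow> ('a \<times> 'a) set" where
  "proc_order ps = {(xs ! j, xs ! k) | xs j k. xs \<in> set ps \<and> j < k \<and> k < length xs}"

definition happened_before :: "'a list list \<Rightarrow> ('a \<times> 'a) set \<Rightarrow> ('a \<times> 'a) set" where
  "happened_before ps msgs = (proc_order ps \<union> msgs)\<^sup>+"

definition computation ::
  "'a set \<Rightarrow> ('a \<times> 'a) set \<Rightarrow> 'a list list \<Rightarrow> ('a \<times> 'a) set \<Rightarrow> bool" where
  "computation E R ps msgs \<longleftrightarrow>
     R \<subseteq> E \<times> E \<and>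
     ps \<noteq> [] \<and> (\<forall>xs\<in>set ps. xs \<noteq> []) \<and>
     distinct (concat ps) \<and> set (concat ps) = E \<and>
     msgs \<subseteq> E \<times> E \<and>
     happened_before ps msgs \<subseteq> R\<^sup>+ \<and>
     (\<forall>x\<in>hd ` set ps. \<forall>y\<in>hd ` set ps. (x, y) \<in> R\<^sup>*) \<and>
     (\<forall>x\<in>last ` set ps. \<forall>y\<in>last ` set ps. (x, y) \<in> R\<^sup>*)"

definition cuts :: "'a set \<Rightarrow> ('a \<times> 'a) set \<Rightarrow> 'a set set" where
  "cuts E R = {C. C \<subseteq> E \<and> (\<forall>(u, v)\<in>R. v \<in> C \<longrightarrow> u \<in> C)}"

definition nontrivial_cut :: "'a set \<Rightarrow> ('a \<times> 'a) set \<Rightarrow> 'a set \<Rightarrow> bool" where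
  "nontrivial_cut E R C \<longleftrightarrow> C \<in> cuts E R \<and> C \<noteq> {} \<and> C \<noteq> E"

definition regular :: "'a set \<Rightarrow> ('a \<times> 'a) set \<Rightarrow> ('a set \<Rightarrow> bool) \<Rightarrow> bool" where
  "regular E R b \<longleftrightarrow>
     (\<forall>C1 C2. nontrivial_cut E R C1 \<longrightarrow> nontrivial_cut E R C2 \<longrightarrow> b C1 \<longrightarrow> b C2 \<longrightarrow>
        b (C1 \<inter> C2) \<and> b (C1 \<union> C2))"

definition is_slice ::
  "'a set \<Rightarrow> ('a \<times> 'a) set \<Rightarrow> ('a set \<Rightarrow> bool) \<Rightarrow> ('a \<times> 'a) set \<Rightarrow> bool" where
  "is_slice E R b S \<longleftrightarrow>
     S \<subseteq> E \<times> E \<and>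
     {C. nontrivial_cut E R C \<and> b C} \<subseteq> cuts E S \<and>
     (\<forall>S'. S' \<subseteq> E \<times> E \<longrightarrow> {C. nontrivial_cut E R C \<and> b C} \<subseteq> cuts E S' \<longrightarrow>
        card (cuts E S) \<le> card (cuts E S'))"

definition sccs :: "'a set \<Rightarrow> ('a \<times> 'a) set \<Rightarrow> 'a set set" where
  "sccs E R = (\<lambda>u. {v \<in> E. (u, v) \<in> R\<^sup>* \<and> (v, u) \<in> R\<^sup>*}) ` E"

definition possibly :: "'a set \<Rightarrow> ('a \<times> 'a) set \<Rightarrow> ('a set \<Rightarrow> bool) \<Rightarrow> bool" where
  "possibly E R b \<longleftrightarrow> (\<exists>C. nontrivial_cut E R C \<and> b C)"

definition invariant :: "'a set \<Rightarrow> ('a \<times> 'a) set \<Rightarrow> ('a set \<Rightarrow> bool) \<Rightarrow> bool" where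
  "invariant E R b \<longleftrightarrow> (\<forall>C. nontrivial_cut E R C \<longrightarrow> b C)"

definition maximal_chain :: "'a set \<Rightarrow> ('a \<times> 'a) set \<Rightarrow> 'a set list \<Rightarrow> bool" where
  "maximal_chain E R Cs \<longleftrightarrow>
     Cs \<noteq> [] \<and> hd Cs = {} \<and> last Cs = E \<and>
     (\<forall>j < length Cs. Cs ! j \<in> cuts E R) \<and>
     (\<forall>j. Suc j < length Cs \<longrightarrow> Cs ! j \<subset> Cs ! Suc j \<and>
        \<not> (\<exists>D\<in>cuts E R. Cs ! j \<subset> D \<and> D \<subset> Cs ! Suc j))"

definition controllable :: "'a set \<Rightarrow> ('a \<times> 'a) set \<Rightarrow> ('a set \<Rightarrow> bool) \<Rightarrow> bool" where
  "controllable E R b \<longleftrightarrow>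
     (\<exists>Cs. maximal_chain E R Cs \<and>
        (\<forall>j < length Cs. Cs ! j \<noteq> {} \<and> Cs ! j \<noteq> E \<longrightarrow> b (Cs ! j)))"

end

theory Submission
  imports Defs
begin

(* A consistent cut is closed under predecessors, hence a union of strongly connected
   components.  The number of components a cut meets is therefore a rank that strictly
   increases along proper inclusions of cuts and grows by exactly one from a cut to a cut
   covering it.  So every maximal chain of cuts has one more member than the graph has
   components, and a strict chain from the empty cut to E of that length is maximal.

   Regularity makes the cuts satisfying b, together with the two trivial cuts, a
   sublattice of the cuts of the computation.  By Birkhoff's representation this family is
   exactly the set of cuts of some graph, so by minimality it is the set of cuts of the
   slice.  Now b possibly holds iff the slice has a non-trivial cut, i.e. at least two
   components; b is invariant iff the slice keeps every cut; and b is controllable iff some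
   maximal chain of the computation consists of cuts of the slice, i.e. iff maximal chains
   of the slice are as long as those of the computation. *)

lemma cuts_empty [simp]: "{} \<in> cuts E T"
  by (simp add: cuts_def)

lemma cuts_carrier: "T \<subseteq> E \<times> E \<Longrightarrow> E \<in> cuts E T"
  by (auto simp: cuts_def)

lemma cut_subset: "C \<in> cuts E T \<Longrightarrow> C \<subseteq> E"
  by (simp add: cuts_def)

lemma finite_cuts: "finite E \<Longrightarrow> finite (cuts E T)"
  by (rule finite_subset[of _ "Pow E"]) (auto simp: cuts_def)

lemma cut_rtrancl_closed:
  assumes "C \<in> cuts E T" "(u, v) \<in> T\<^sup>*" "v \<in> C"
  shows "u \<in> C"
  using assms(2,3)
proof (induction rule: converse_rtrancl_induct)
  case (step y z)
  then show ?case using assms(1) by (auto simp: cuts_def)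
qed

lemma cut_Un_predecessors:
  assumes "T \<subseteq> E \<times> E" "C \<in> cuts E T"
  shows "C \<union> {u \<in> E. (u, w) \<in> T\<^sup>*} \<in> cuts E T"
  using assms unfolding cuts_def by (auto intro: converse_rtrancl_into_rtrancl)

definition scc_of :: "'a set \<Rightarrow> ('a \<times> 'a) set \<Rightarrow> 'a \<Rightarrow> 'a set" where
  "scc_of E T u = {v \<in> E. (u, v) \<in> T\<^sup>* \<and> (v, u) \<in> T\<^sup>*}"

lemma sccs_eq_image_scc_of: "sccs E T = scc_of E T ` E"
  by (simp add: sccs_def scc_of_def)

lemma scc_of_eqI: "v \<in> scc_of E T u \<Longrightarrow> scc_of E T v = scc_of E T u"
  unfolding scc_of_def by (auto intro: rtrancl_trans)

lemma scc_of_notin_image_cut: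
  assumes "C \<in> cuts E T" "v \<in> E" "v \<notin> C"
  shows "scc_of E T v \<notin> scc_of E T ` C"
proof
  assume "scc_of E T v \<in> scc_of E T ` C"
  then obtain u where "u \<in> C" "scc_of E T v = scc_of E T u" by auto
  moreover have "v \<in> scc_of E T v" using assms(2) by (simp add: scc_of_def)
  ultimately have "(v, u) \<in> T\<^sup>*" "u \<in> C" by (auto simp: scc_of_def)
  then show False using cut_rtrancl_closed[OF assms(1)] assms(3) by blast
qed

definition cut_rank :: "'a set \<Rightarrow> ('a \<times> 'a) set \<Rightarrow> 'a set \<Rightarrow> nat" where
  "cut_rank E T C = card (scc_of E T ` C)"

lemma cut_rank_empty [simp]: "cut_rank E T {} = 0"
  by (simp add: cut_rank_def)

lemma cut_rank_carrier: "cut_rank E T E = card (sccs E T)"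
  by (simp add: cut_rank_def sccs_eq_image_scc_of)

lemma cut_rank_le_card_sccs: "finite E \<Longrightarrow> C \<subseteq> E \<Longrightarrow> cut_rank E T C \<le> card (sccs E T)"
  unfolding cut_rank_def sccs_eq_image_scc_of by (intro card_mono finite_imageI image_mono)

lemma cut_rank_strict_mono:
  assumes "finite E" "C \<in> cuts E T" "D \<in> cuts E T" "C \<subset> D"
  shows "cut_rank E T C < cut_rank E T D"
proof -
  obtain v where v: "v \<in> D" "v \<notin> C" using assms(4) by blast
  have "scc_of E T v \<notin> scc_of E T ` C"
    using v assms(2,3) by (intro scc_of_notin_image_cut) (auto simp: cuts_def)
  then have "scc_of E T ` C \<subset> scc_of E T ` D"
    using assms(4) v(1) by blast
  moreover have "finite (scc_of E T ` D)"
    using assms(1,3) by (auto simp: cuts_def intro: finite_subset)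
  ultimately show ?thesis unfolding cut_rank_def by (rule psubset_card_mono[rotated])
qed

lemma cut_rank_cover:
  assumes "finite E" "T \<subseteq> E \<times> E" "C \<in> cuts E T" "D \<in> cuts E T" "C \<subset> D"
    and no_between: "\<not> (\<exists>D'\<in>cuts E T. C \<subset> D' \<and> D' \<subset> D)"
  shows "cut_rank E T D = Suc (cut_rank E T C)"
proof -
  have DE: "D \<subseteq> E" using assms(4) by (rule cut_subset)
  have D_eq: "C \<union> {u \<in> E. (u, w) \<in> T\<^sup>*} = D" if "w \<in> D - C" for w
  proof -
    have "C \<union> {u \<in> E. (u, w) \<in> T\<^sup>*} \<subseteq> D"
      using assms(5) cut_rtrancl_closed[OF assms(4)] that by blast
    moreover have "C \<subset> C \<union> {u \<in> E. (u, w) \<in> T\<^sup>*}" using that DE by blast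
    ultimately show ?thesis using no_between cut_Un_predecessors[OF assms(2,3)] by blast
  qed
  obtain v where v: "v \<in> D - C" using assms(5) by blast
  have "scc_of E T w = scc_of E T v" if "w \<in> D - C" for w
  proof (rule scc_of_eqI)
    show "w \<in> scc_of E T v"
      using D_eq[OF v] D_eq[OF that] that v DE by (auto simp: scc_of_def)
  qed
  then have "scc_of E T ` D = insert (scc_of E T v) (scc_of E T ` C)"
    using assms(5) v by blast
  moreover have "finite (scc_of E T ` C)"
    using assms(1,3) by (auto simp: cuts_def intro: finite_subset)
  moreover have "scc_of E T v \<notin> scc_of E T ` C"
    using v DE by (intro scc_of_notin_image_cut[OF assms(3)]) auto
  ultimately show ?thesis by (simp add: cut_rank_def)
qed

definition cut_chain :: "'a set \<Rightarrow> ('a \<times> 'a) set \<Rightarrow> 'a set list \<Rightarrow> bool" where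
  "cut_chain E T Cs \<longleftrightarrow>
     (\<forall>j < length Cs. Cs ! j \<in> cuts E T) \<and>
     (\<forall>j. Suc j < length Cs \<longrightarrow> Cs ! j \<subset> Cs ! Suc j)"

lemma maximal_chain_imp_cut_chain: "maximal_chain E T Cs \<Longrightarrow> cut_chain E T Cs"
  by (simp add: maximal_chain_def cut_chain_def)

lemma cut_rank_cut_chain:
  assumes "finite E" "cut_chain E T Cs" "i \<le> k" "k < length Cs"
  shows "cut_rank E T (Cs ! i) + (k - i) \<le> cut_rank E T (Cs ! k)"
  using assms(3,4)
proof (induction k rule: dec_induct)
  case (step k)
  then have "cut_rank E T (Cs ! k) < cut_rank E T (Cs ! Suc k)"
    using assms(2) by (intro cut_rank_strict_mono[OF assms(1)]) (auto simp: cut_chain_def)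
  with step show ?case by simp
qed simp

lemma length_cut_chain_with_gap:
  assumes "finite E" "cut_chain E T Cs" "Suc j < length Cs"
    and "D \<in> cuts E T" "Cs ! j \<subset> D" "D \<subset> Cs ! Suc j"
  shows "length Cs \<le> card (sccs E T)"
proof -
  let ?n = "length Cs - 1" and ?r = "cut_rank E T"
  have cuts: "Cs ! j \<in> cuts E T" "Cs ! Suc j \<in> cuts E T" "Cs ! ?n \<in> cuts E T"
    using assms(2,3) by (auto simp: cut_chain_def)
  have "j \<le> ?r (Cs ! j)"
    using cut_rank_cut_chain[OF assms(1,2), of 0 j] assms(3) by simp
  moreover have "?r (Cs ! j) < ?r D"
    using cut_rank_strict_mono[OF assms(1) cuts(1) assms(4,5)] .
  moreover have "?r D < ?r (Cs ! Suc j)"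
    using cut_rank_strict_mono[OF assms(1) assms(4) cuts(2) assms(6)] .
  moreover have "?r (Cs ! Suc j) + (?n - Suc j) \<le> ?r (Cs ! ?n)"
    using cut_rank_cut_chain[OF assms(1,2), of "Suc j" ?n] assms(3) by simp
  moreover have "?r (Cs ! ?n) \<le> card (sccs E T)"
    using cut_rank_le_card_sccs[OF assms(1) cut_subset[OF cuts(3)]] .
  ultimately show ?thesis using assms(3) by linarith
qed

lemma length_maximal_chain:
  assumes "finite E" "T \<subseteq> E \<times> E" "maximal_chain E T Cs"
  shows "length Cs = Suc (card (sccs E T))"
proof -
  have rank: "cut_rank E T (Cs ! k) = k" if "k < length Cs" for k
    using that
  proof (induction k)
    case 0
    then show ?case using assms(3) by (simp add: maximal_chain_def hd_conv_nth)
  next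
    case (Suc k)
    have "cut_rank E T (Cs ! Suc k) = Suc (cut_rank E T (Cs ! k))"
      using assms(3) Suc.prems
      by (intro cut_rank_cover[OF assms(1,2)]) (auto simp: maximal_chain_def)
    with Suc show ?case by simp
  qed
  have "Cs ! (length Cs - 1) = E" "Cs \<noteq> []"
    using assms(3) by (auto simp: maximal_chain_def last_conv_nth)
  then show ?thesis
    using rank[of "length Cs - 1"] cut_rank_carrier[of E T] by simp
qed

lemma maximal_chain_iff_length:
  assumes "finite E" "T \<subseteq> E \<times> E"
    and "Cs \<noteq> []" "hd Cs = {}" "last Cs = E" "cut_chain E T Cs"
  shows "maximal_chain E T Cs \<longleftrightarrow> length Cs = Suc (card (sccs E T))"
proof
  assume "length Cs = Suc (card (sccs E T))"
  then have "\<not> (\<exists>D\<in>cuts E T. Cs ! j \<subset> D \<and> D \<subset> Cs ! Suc j)" if "Suc j < length Cs" for j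
    using length_cut_chain_with_gap[OF assms(1,6) that] by (metis Suc_n_not_le_n)
  then show "maximal_chain E T Cs"
    using assms(3-6) by (simp add: maximal_chain_def cut_chain_def)
qed (rule length_maximal_chain[OF assms(1,2)])

lemma covered_subcut_exists:
  assumes "finite E" "C \<in> cuts E T" "C \<noteq> {}"
  obtains D where "D \<in> cuts E T" "D \<subset> C" "\<not> (\<exists>D'\<in>cuts E T. D \<subset> D' \<and> D' \<subset> C)"
proof -
  let ?P = "{D \<in> cuts E T. D \<subset> C}"
  have "finite ?P" using finite_cuts[OF assms(1)] by simp
  moreover have "{} \<in> ?P" using assms(3) by auto
  ultimately obtain D where "D \<in> ?P" and "\<forall>D'\<in>?P. D \<subseteq> D' \<longrightarrow> D = D'"
    using finite_has_maximal[of ?P] by blast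
  then show thesis by (intro that) auto
qed

definition maximal_chain_upto :: "'a set \<Rightarrow> ('a \<times> 'a) set \<Rightarrow> 'a set \<Rightarrow> 'a set list \<Rightarrow> bool" where
  "maximal_chain_upto E T C Cs \<longleftrightarrow>
     Cs \<noteq> [] \<and> hd Cs = {} \<and> last Cs = C \<and>
     (\<forall>j < length Cs. Cs ! j \<in> cuts E T) \<and>
     (\<forall>j. Suc j < length Cs \<longrightarrow> Cs ! j \<subset> Cs ! Suc j \<and>
        \<not> (\<exists>D\<in>cuts E T. Cs ! j \<subset> D \<and> D \<subset> Cs ! Suc j))"

lemma maximal_chain_upto_carrier: "maximal_chain_upto E T E = maximal_chain E T"
  by (simp add: fun_eq_iff maximal_chain_upto_def maximal_chain_def)

lemma maximal_chain_upto_snoc: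
  assumes "maximal_chain_upto E T D Cs" "C \<in> cuts E T" "D \<subset> C"
    and "\<not> (\<exists>D'\<in>cuts E T. D \<subset> D' \<and> D' \<subset> C)"
  shows "maximal_chain_upto E T C (Cs @ [C])"
proof -
  have Cs: "Cs \<noteq> []" "Cs ! (length Cs - 1) = D"
    using assms(1) by (auto simp: maximal_chain_upto_def last_conv_nth)
  have steps: "(Cs @ [C]) ! j \<subset> (Cs @ [C]) ! Suc j \<and>
      \<not> (\<exists>D'\<in>cuts E T. (Cs @ [C]) ! j \<subset> D' \<and> D' \<subset> (Cs @ [C]) ! Suc j)"
    if "Suc j < length (Cs @ [C])" for j
  proof (cases "Suc j < length Cs")
    case True
    then show ?thesis using assms(1) by (simp add: maximal_chain_upto_def nth_append)
  next
    case False
    with that have "j = length Cs - 1" "Suc j = length Cs" by auto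
    then show ?thesis using Cs assms(3,4) by (simp add: nth_append)
  qed
  have members: "(Cs @ [C]) ! j \<in> cuts E T" if "j < length (Cs @ [C])" for j
    using assms(1,2) that by (auto simp: maximal_chain_upto_def nth_append less_Suc_eq)
  have "Cs @ [C] \<noteq> [] \<and> hd (Cs @ [C]) = {} \<and> last (Cs @ [C]) = C"
    using assms(1) Cs(1) by (simp add: maximal_chain_upto_def)
  with steps members show ?thesis
    unfolding maximal_chain_upto_def by blast
qed

lemma maximal_chain_upto_exists:
  assumes "finite E" "C \<in> cuts E T"
  shows "\<exists>Cs. maximal_chain_upto E T C Cs"
  using assms(2)
proof (induction "card C" arbitrary: C rule: less_induct)
  case less
  show ?case
  proof (cases "C = {}")
    case True
    then show ?thesis by (auto simp: maximal_chain_upto_def intro: exI[of _ "[{}]"])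
  next
    case False
    then obtain D where D: "D \<in> cuts E T" "D \<subset> C"
      and no_between: "\<not> (\<exists>D'\<in>cuts E T. D \<subset> D' \<and> D' \<subset> C)"
      using covered_subcut_exists[OF assms(1) less.prems] by blast
    have "card D < card C"
      using D(2) finite_subset[OF cut_subset[OF less.prems] assms(1)]
      by (rule psubset_card_mono[rotated])
    then obtain Cs where "maximal_chain_upto E T D Cs" using less.hyps D(1) by blast
    then show ?thesis using maximal_chain_upto_snoc less.prems D(2) no_between by blast
  qed
qed

lemma maximal_chain_exists: "finite E \<Longrightarrow> T \<subseteq> E \<times> E \<Longrightarrow> \<exists>Cs. maximal_chain E T Cs"
  using maximal_chain_upto_exists[OF _ cuts_carrier] by (simp add: maximal_chain_upto_carrier)

lemma two_le_card_sccs_iff: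
  assumes "finite E" "T \<subseteq> E \<times> E" "E \<noteq> {}"
  shows "2 \<le> card (sccs E T) \<longleftrightarrow> (\<exists>C\<in>cuts E T. C \<noteq> {} \<and> C \<noteq> E)"
proof
  assume "\<exists>C\<in>cuts E T. C \<noteq> {} \<and> C \<noteq> E"
  then obtain C where "C \<in> cuts E T" "C \<noteq> {}" "C \<noteq> E" by blast
  then have C: "C \<in> cuts E T" "{} \<subset> C" "C \<subset> E"
    using cut_subset[of C E T] by auto
  have "cut_rank E T {} < cut_rank E T C"
    using cut_rank_strict_mono[OF assms(1) cuts_empty C(1,2)] .
  moreover have "cut_rank E T C < cut_rank E T E"
    using cut_rank_strict_mono[OF assms(1) C(1) cuts_carrier[OF assms(2)] C(3)] .
  ultimately show "2 \<le> card (sccs E T)" by (simp add: cut_rank_carrier)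
next
  assume "2 \<le> card (sccs E T)"
  then have "\<not> maximal_chain E T [{}, E]"
    using length_maximal_chain[OF assms(1,2)] by fastforce
  then show "\<exists>C\<in>cuts E T. C \<noteq> {} \<and> C \<noteq> E"
    using assms(3) cuts_carrier[OF assms(2)] by (auto simp: maximal_chain_def less_Suc_eq)
qed

lemma maximal_chain_within_subcuts_iff:
  assumes "finite E" "R \<subseteq> E \<times> E" "S \<subseteq> E \<times> E" "cuts E S \<subseteq> cuts E R"
  shows "(\<exists>Cs. maximal_chain E R Cs \<and> (\<forall>j < length Cs. Cs ! j \<in> cuts E S)) \<longleftrightarrow>
         card (sccs E S) = card (sccs E R)"
proof
  assume "\<exists>Cs. maximal_chain E R Cs \<and> (\<forall>j < length Cs. Cs ! j \<in> cuts E S)"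
  then obtain Cs where Cs: "maximal_chain E R Cs" "\<forall>j < length Cs. Cs ! j \<in> cuts E S"
    by blast
  have "\<not> (\<exists>D\<in>cuts E S. Cs ! j \<subset> D \<and> D \<subset> Cs ! Suc j)" if "Suc j < length Cs" for j
  proof -
    have "\<not> (\<exists>D\<in>cuts E R. Cs ! j \<subset> D \<and> D \<subset> Cs ! Suc j)"
      using Cs(1) that by (simp add: maximal_chain_def)
    then show ?thesis using assms(4) by blast
  qed
  then have "maximal_chain E S Cs"
    using Cs by (simp add: maximal_chain_def)
  then show "card (sccs E S) = card (sccs E R)"
    using length_maximal_chain[OF assms(1,3)] length_maximal_chain[OF assms(1,2) Cs(1)] by simp
next
  assume card_eq: "card (sccs E S) = card (sccs E R)"
  obtain Cs where Cs: "maximal_chain E S Cs"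
    using maximal_chain_exists[OF assms(1,3)] by blast
  have ends: "Cs \<noteq> []" "hd Cs = {}" "last Cs = E"
    using Cs by (simp_all add: maximal_chain_def)
  have "cut_chain E R Cs"
    using maximal_chain_imp_cut_chain[OF Cs] assms(4) by (auto simp: cut_chain_def)
  moreover have "length Cs = Suc (card (sccs E R))"
    using length_maximal_chain[OF assms(1,3) Cs] card_eq by simp
  ultimately have "maximal_chain E R Cs"
    using maximal_chain_iff_length[OF assms(1,2) ends] by blast
  then show "\<exists>Cs. maximal_chain E R Cs \<and> (\<forall>j < length Cs. Cs ! j \<in> cuts E S)"
    using Cs by (auto simp: maximal_chain_def)
qed

lemma Inter_mem_if_Int_closed:
  assumes "finite F" "F \<noteq> {}" "F \<subseteq> K" "\<And>X Y. X \<in> K \<Longrightarrow> Y \<in> K \<Longrightarrow> X \<inter> Y \<in> K"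
  shows "\<Inter>F \<in> K"
  using assms(1-3) by (induction F rule: finite_ne_induct) (simp_all add: assms(4))

lemma Union_mem_if_Un_closed:
  assumes "finite F" "F \<subseteq> K" "{} \<in> K" "\<And>X Y. X \<in> K \<Longrightarrow> Y \<in> K \<Longrightarrow> X \<union> Y \<in> K"
  shows "\<Union>F \<in> K"
  using assms(1,2) by (induction F rule: finite_induct) (simp_all add: assms(3,4))

definition family_order :: "'a set \<Rightarrow> 'a set set \<Rightarrow> ('a \<times> 'a) set" where
  "family_order E K = {(u, v) \<in> E \<times> E. \<forall>C\<in>K. v \<in> C \<longrightarrow> u \<in> C}"

lemma cuts_family_order:
  assumes "finite E" "K \<subseteq> Pow E" "{} \<in> K" "E \<in> K"
    and Int_closed: "\<And>X Y. X \<in> K \<Longrightarrow> Y \<in> K \<Longrightarrow> X \<inter> Y \<in> K"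
    and Un_closed: "\<And>X Y. X \<in> K \<Longrightarrow> Y \<in> K \<Longrightarrow> X \<union> Y \<in> K"
  shows "cuts E (family_order E K) = K"
proof
  show "K \<subseteq> cuts E (family_order E K)"
    using assms(2) by (auto simp: cuts_def family_order_def)
next
  show "cuts E (family_order E K) \<subseteq> K"
  proof
    fix D assume D: "D \<in> cuts E (family_order E K)"
    define least where "least v = \<Inter>{C \<in> K. v \<in> C}" for v
    have least_mem: "least v \<in> K" if "v \<in> E" for v
      unfolding least_def
      using that assms(4) finite_subset[OF assms(2)] assms(1)
      by (intro Inter_mem_if_Int_closed[OF _ _ _ Int_closed]) auto
    have "least v \<subseteq> D" if "v \<in> D" for v
    proof
      fix u assume "u \<in> least v"
      moreover have "v \<in> E" using that D by (auto simp: cuts_def)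
      moreover from this have "least v \<subseteq> E" using least_mem assms(2) by blast
      ultimately have "(u, v) \<in> family_order E K"
        by (auto simp: least_def family_order_def)
      then show "u \<in> D" using D that by (auto simp: cuts_def)
    qed
    then have "D = \<Union>(least ` D)"
      by (auto simp: least_def)
    moreover have "\<Union>(least ` D) \<in> K"
      using D assms(1) least_mem
      by (intro Union_mem_if_Un_closed[OF _ _ assms(3) Un_closed])
         (auto simp: cuts_def intro: finite_subset)
    ultimately show "D \<in> K" by simp
  qed
qed

definition satisfying_cuts :: "'a set \<Rightarrow> ('a \<times> 'a) set \<Rightarrow> ('a set \<Rightarrow> bool) \<Rightarrow> 'a set set" where
  "satisfying_cuts E R b = {C \<in> cuts E R. C = {} \<or> C = E \<or> b C}"

lemma satisfying_cuts_Int: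
  assumes "regular E R b" "X \<in> satisfying_cuts E R b" "Y \<in> satisfying_cuts E R b"
  shows "X \<inter> Y \<in> satisfying_cuts E R b"
proof (cases "X = E \<or> Y = E")
  case True
  have "X \<subseteq> E" "Y \<subseteq> E" using assms(2,3) by (auto simp: satisfying_cuts_def cuts_def)
  with True have "X \<inter> Y = X \<or> X \<inter> Y = Y" by blast
  then show ?thesis using assms(2,3) by auto
next
  case False
  have "X \<inter> Y \<in> cuts E R" using assms(2,3) by (auto simp: satisfying_cuts_def cuts_def)
  with False show ?thesis
    using assms by (auto simp: satisfying_cuts_def regular_def nontrivial_cut_def)
qed

lemma satisfying_cuts_Un:
  assumes "regular E R b" "X \<in> satisfying_cuts E R b" "Y \<in> satisfying_cuts E R b"
  shows "X \<union> Y \<in> satisfying_cuts E R b"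
proof (cases "X = {} \<or> Y = {}")
  case True
  then have "X \<union> Y = X \<or> X \<union> Y = Y" by blast
  then show ?thesis using assms(2,3) by auto
next
  case False
  have "X \<union> Y \<in> cuts E R" "X \<subseteq> E" "Y \<subseteq> E"
    using assms(2,3) by (auto simp: satisfying_cuts_def cuts_def)
  with False show ?thesis
    using assms by (auto simp: satisfying_cuts_def regular_def nontrivial_cut_def Un_absorb1 Un_absorb2)
qed

lemma cuts_slice:
  assumes "finite E" "R \<subseteq> E \<times> E" "regular E R b" "is_slice E R b S"
  shows "cuts E S = satisfying_cuts E R b"
proof -
  let ?K = "satisfying_cuts E R b"
  have S: "S \<subseteq> E \<times> E" "{C. nontrivial_cut E R C \<and> b C} \<subseteq> cuts E S"
    and S_least: "\<And>S'. S' \<subseteq> E \<times> E \<Longrightarrow> {C. nontrivial_cut E R C \<and> b C} \<subseteq> cuts E S' \<Longrightarrow>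
        card (cuts E S) \<le> card (cuts E S')"
    using assms(4) unfolding is_slice_def by blast+
  have b_cuts: "{C. nontrivial_cut E R C \<and> b C} \<subseteq> ?K"
    by (auto simp: nontrivial_cut_def satisfying_cuts_def)
  have "?K \<subseteq> cuts E S"
    using S cuts_carrier[OF S(1)] by (auto simp: satisfying_cuts_def nontrivial_cut_def)
  moreover have "cuts E (family_order E ?K) = ?K"
    using assms(1-3) cuts_carrier[OF assms(2)]
    by (intro cuts_family_order satisfying_cuts_Int satisfying_cuts_Un)
       (auto simp: satisfying_cuts_def cuts_def)
  then have "card (cuts E S) \<le> card ?K"
    using S_least[of "family_order E ?K"] b_cuts by (auto simp: family_order_def)
  ultimately show ?thesis
    using card_seteq[OF finite_cuts[OF assms(1)]] by blast
qed

lemma computation_carrier: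
  assumes "computation E R ps msgs"
  shows "finite E" "E \<noteq> {}" "R \<subseteq> E \<times> E"
proof -
  have E: "E = set (concat ps)" and "ps \<noteq> []" "\<forall>xs\<in>set ps. xs \<noteq> []"
    using assms by (auto simp: computation_def)
  then show "finite E" "E \<noteq> {}" by (auto simp: neq_Nil_conv)
  show "R \<subseteq> E \<times> E" using assms by (simp add: computation_def)
qed

lemma possibly_iff_satisfying_cuts:
  "possibly E R b \<longleftrightarrow> (\<exists>C\<in>satisfying_cuts E R b. C \<noteq> {} \<and> C \<noteq> E)"
  by (auto simp: possibly_def satisfying_cuts_def nontrivial_cut_def)

lemma invariant_iff_satisfying_cuts:
  "invariant E R b \<longleftrightarrow> satisfying_cuts E R b = cuts E R"
  by (auto simp: invariant_def satisfying_cuts_def nontrivial_cut_def)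

lemma controllable_iff_satisfying_cuts:
  "controllable E R b \<longleftrightarrow>
     (\<exists>Cs. maximal_chain E R Cs \<and> (\<forall>j < length Cs. Cs ! j \<in> satisfying_cuts E R b))"
proof -
  have "(\<forall>j < length Cs. Cs ! j \<noteq> {} \<and> Cs ! j \<noteq> E \<longrightarrow> b (Cs ! j)) \<longleftrightarrow>
      (\<forall>j < length Cs. Cs ! j \<in> satisfying_cuts E R b)" if "maximal_chain E R Cs" for Cs
    using that unfolding maximal_chain_def satisfying_cuts_def by blast
  then show ?thesis unfolding controllable_def by blast
qed

theorem theorem12:
  fixes E :: "'a set" and R S msgs :: "('a \<times> 'a) set" and ps :: "'a list list"
    and b :: "'a set \<Rightarrow> bool"
  assumes "computation E R ps msgs"
    and "regular E R b"
    and "is_slice E R b S"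
  shows "(possibly E R b \<longleftrightarrow> card (sccs E S) \<ge> 2) \<and>
         (invariant E R b \<longleftrightarrow> cuts E S = cuts E R) \<and>
         (controllable E R b \<longleftrightarrow> card (sccs E S) = card (sccs E R))"
proof -
  note carrier = computation_carrier[OF assms(1)]
  have S: "S \<subseteq> E \<times> E" using assms(3) by (simp add: is_slice_def)
  have cuts_S: "cuts E S = satisfying_cuts E R b"
    using cuts_slice[OF carrier(1,3) assms(2,3)] .
  have "possibly E R b \<longleftrightarrow> card (sccs E S) \<ge> 2"
    using two_le_card_sccs_iff[OF carrier(1) S carrier(2)] by (simp add: possibly_iff_satisfying_cuts cuts_S)
  moreover have "invariant E R b \<longleftrightarrow> cuts E S = cuts E R"
    by (simp add: invariant_iff_satisfying_cuts cuts_S)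
  moreover have "controllable E R b \<longleftrightarrow> card (sccs E S) = card (sccs E R)"
    using maximal_chain_within_subcuts_iff[OF carrier(1,3) S]
    by (simp add: controllable_iff_satisfying_cuts cuts_S satisfying_cuts_def)
  ultimately show ?thesis by blast
qed

end
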